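(* Let $\beta=\gamma=\eta=1$. Let Assumptions A1, A2 and A3 hold with $\varepsilon_0=\varepsilon\le1$. Let $T\in\mathbb{N}$ satisfy $T\le\frac{1}{2\varepsilon^2}$, and let $R\ge2\|r_0\|(\sqrt T+2\varepsilon T^2)$. Then for all $\tau\le T$: $$\|\theta_\tau-\theta_0\|\le\tfrac R2,\qquad \|\tilde r_\tau-r_\tau\|\le4\varepsilon\tau\|r_0\|,\qquad \|\tilde\theta_\tau-\theta_\tau\|\le2\varepsilon\tau^2\|r_0\|.$$
   Context: Norms: $\|\cdot\|$ is the Euclidean norm for vectors and the spectral norm for matrices. Setting. Let $f:\mathbb{R}^N\to\mathbb{R}^n$ be continuously differentiable with Jacobian $\mathcal{J}(\theta)\in\mathbb{R}^{n\times N}$. Let $A\in\mathbb{R}^{m\times n}$ and let $\gamma\ge\|A\|$. Fix $y\in\mathbb{R}^m$, a starting point $\theta_0\in\mathbb{R}^N$, and a fixed deterministic "reference Jacobian" $J\in\mathbb{R}^{n\times N}$. Iterations. Gradient descent with step size $\eta>0$ is applied to $\mathcal{L}(\theta)=\frac12\|Af(\theta)-y\|^2$ and to $\mathcal{L}_{\rm lin}(\theta)=\frac12\|Af(\theta_0)+AJ(\theta-\theta_0)-y\|^2$, both started at $\theta_0=\tilde\theta_0$: $$\theta_{\tau+1}=\theta_\tau-\eta\mathcal{J}(\theta_\tau)^\top A^\top r_\tau,\qquad r_\tau:=Af(\theta_\tau)-y,$$ $$\tilde\theta_{\tau+1}=\tilde\theta_\tau-\eta J^\top A^\top\tilde r_\tau,\qquad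 \tilde r_\tau:=Af(\theta_0)+AJ(\tilde\theta_\tau-\theta_0)-y.$$ Assumption A1: there is $\beta>0$ with $\|J\|\le\beta$ and $\|\mathcal{J}(\theta)\|\le\beta$ for all $\theta\in\mathbb{R}^N$. Assumption A2: there is $\varepsilon_0>0$ with $\|\mathcal{J}(\theta_0)-J\|\le\varepsilon_0$ and $\|\mathcal{J}(\theta_0)\mathcal{J}(\theta_0)^\top-JJ^\top\|\le\varepsilon_0^2$. Assumption A3: there are $\varepsilon>0$ and $R>0$ with $\|\mathcal{J}(\theta)-\mathcal{J}(\theta_0)\|\le\varepsilon/2$ for all $\theta$ satisfying $\|\theta-\theta_0\|\le R$. *)

theory Defs
  imports "HOL-Analysis.Analysis"
begin

definition spec_norm :: "real^'c^'r \<Rightarrow> real" where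
  "spec_norm M = onorm (\<lambda>x. M *v x)"

end

theory Submission
  imports Defs
begin

text \<open>One step of linearized gradient descent decreases the squared norm of the
  linearized residual by the squared norm of its gradient, so these squared step lengths
  sum to at most \<open>\<parallel>r\<^sub>0\<parallel>\<^sup>2\<close> and, by Cauchy--Schwarz, the linearized iterates stay
  within \<open>sqrt \<tau> \<parallel>r\<^sub>0\<parallel>\<close> of \<open>\<theta>\<^sub>0\<close>. As long as the true iterates stay in the ball of
  radius \<open>R\<close>, their Jacobians are \<open>\<epsilon>\<close>-close to \<open>J\<close> and to each other, so the true
  residual grows by at most a factor \<open>1 + \<epsilon>\<^sup>2\<close> per step (hence stays below
  \<open>4/3 \<parallel>r\<^sub>0\<parallel>\<close> for \<open>\<tau> \<le> 1/(2\<epsilon>\<^sup>2)\<close>), and each step adds \<open>O(\<epsilon> \<parallel>r\<^sub>0\<parallel>)\<close> to the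
  residual gap and \<open>O(\<epsilon> \<tau> \<parallel>r\<^sub>0\<parallel>)\<close> to the parameter gap. The choice of \<open>R\<close> then
  keeps the true iterates within \<open>R/2\<close> of \<open>\<theta>\<^sub>0\<close>, which closes the induction.\<close>

section \<open>Spectral norm bounds\<close>

lemma norm_mult_vec_le_spec_norm: "norm (M *v x) \<le> spec_norm M * norm (x::real^'c)"
  unfolding spec_norm_def by (rule onorm) simp

lemma spec_norm_nonneg: "0 \<le> spec_norm (M::real^'c^'r)"
  unfolding spec_norm_def by (rule onorm_pos_le) simp

lemma norm_transpose_mult_vec_le_spec_norm:
  "norm (transpose M *v x) \<le> spec_norm (M::real^'c^'r) * norm x"
proof -
  let ?w = "transpose M *v x"
  have "norm ?w ^ 2 = inner x (M *v ?w)"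
    by (simp add: power2_norm_eq_inner dot_lmul_matrix)
  also have "\<dots> \<le> norm x * norm (M *v ?w)"
    by (rule norm_cauchy_schwarz)
  also have "\<dots> \<le> norm x * (spec_norm M * norm ?w)"
    by (simp add: mult_left_mono norm_mult_vec_le_spec_norm)
  finally have "norm ?w * norm ?w \<le> (spec_norm M * norm x) * norm ?w"
    by (simp add: power2_eq_square algebra_simps)
  then show ?thesis
    using spec_norm_nonneg[of M] by (cases "norm ?w = 0") (simp_all add: mult_le_cancel_right_pos)
qed

lemma norm_mult_vec_le: "spec_norm M \<le> e \<Longrightarrow> norm (M *v x) \<le> e * norm x"
  by (rule order_trans[OF norm_mult_vec_le_spec_norm mult_right_mono]) simp_all

lemma norm_transpose_mult_vec_le: "spec_norm M \<le> e \<Longrightarrow> norm (transpose M *v x) \<le> e * norm x"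
  by (rule order_trans[OF norm_transpose_mult_vec_le_spec_norm mult_right_mono]) simp_all

lemma norm_mult_vec_le_norm: "spec_norm M \<le> 1 \<Longrightarrow> norm (M *v x) \<le> norm x"
  using norm_mult_vec_le[of M 1 x] by simp

lemma norm_transpose_mult_vec_le_norm: "spec_norm M \<le> 1 \<Longrightarrow> norm (transpose M *v x) \<le> norm x"
  using norm_transpose_mult_vec_le[of M 1 x] by simp

lemma spec_norm_diff_le: "spec_norm (M - N) \<le> spec_norm M + spec_norm (N::real^'c^'r)"
  unfolding spec_norm_def[of "M - N"]
proof (rule onorm_le)
  fix x
  have "norm ((M - N) *v x) \<le> norm (M *v x) + norm (N *v x)"
    by (simp add: matrix_vector_mult_diff_rdistrib norm_triangle_ineq4)
  also have "\<dots> \<le> (spec_norm M + spec_norm N) * norm x"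
    using norm_mult_vec_le_spec_norm[of M x] norm_mult_vec_le_spec_norm[of N x]
    by (simp add: distrib_right)
  finally show "norm ((M - N) *v x) \<le> (spec_norm M + spec_norm N) * norm x" .
qed

lemma spec_norm_eq_onorm_diff:
  "onorm ((\<lambda>h. M *v h) - (\<lambda>h. N *v h)) = spec_norm (M - N)"
  unfolding spec_norm_def fun_diff_def
  by (rule arg_cong[where f = onorm]) (simp add: fun_eq_iff matrix_vector_mult_diff_rdistrib)

lemma transpose_diff: "transpose (M - N) = transpose M - transpose (N::real^'c^'r)"
  by (simp add: transpose_def vec_eq_iff)

lemma norm_gram_diff_le:
  fixes M P N :: "real^'c^'r"
  assumes "spec_norm M \<le> 1" "spec_norm P \<le> 1" "spec_norm (M - P) \<le> e"
    and "spec_norm (P ** transpose P - N ** transpose N) \<le> d"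
  shows "norm (M *v (transpose M *v q) - N *v (transpose N *v q)) \<le> (2 * e + d) * norm q"
proof -
  have split: "M *v (transpose M *v q) - N *v (transpose N *v q)
      = M *v (transpose (M - P) *v q) + (M - P) *v (transpose P *v q)
        + (P ** transpose P - N ** transpose N) *v q"
    by (simp add: transpose_diff matrix_vector_mult_diff_rdistrib matrix_vector_mult_diff_distrib
        matrix_vector_mul_assoc[symmetric])
  have "norm (M *v (transpose (M - P) *v q)) \<le> norm (transpose (M - P) *v q)"
    using assms(1) by (rule norm_mult_vec_le_norm)
  also have "\<dots> \<le> e * norm q"
    using assms(3) by (rule norm_transpose_mult_vec_le)
  finally have "norm (M *v (transpose (M - P) *v q)) \<le> e * norm q" .
  moreover have "norm ((M - P) *v (transpose P *v q)) \<le> e * norm q"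
  proof -
    have "norm ((M - P) *v (transpose P *v q)) \<le> e * norm (transpose P *v q)"
      using assms(3) by (rule norm_mult_vec_le)
    also have "\<dots> \<le> e * norm q"
      using norm_transpose_mult_vec_le_norm[OF assms(2)] assms(3) spec_norm_nonneg[of "M - P"]
      by (intro mult_left_mono) auto
    finally show ?thesis .
  qed
  moreover have "norm ((P ** transpose P - N ** transpose N) *v q) \<le> d * norm q"
    using norm_mult_vec_le[OF assms(4)] .
  ultimately have "norm (M *v (transpose M *v q) - N *v (transpose N *v q))
      \<le> e * norm q + e * norm q + d * norm q"
    unfolding split by (intro norm_triangle_mono)
  also have "\<dots> = (2 * e + d) * norm q"
    by (simp add: algebra_simps)
  finally show ?thesis .
qed

lemma norm_diff_sq_le_of_inner_eq:
  fixes x k :: "'a::real_inner"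
  assumes "norm k \<le> c" "inner x k = c ^ 2"
  shows "norm (x - k) ^ 2 \<le> norm x ^ 2 - c ^ 2"
proof -
  have "norm (x - k) ^ 2 = norm x ^ 2 - 2 * inner x k + norm k ^ 2"
    by (simp add: power2_norm_eq_inner inner_diff inner_commute)
  moreover have "norm k ^ 2 \<le> c ^ 2" using assms(1) by (simp add: power_mono)
  ultimately show ?thesis using assms(2) by simp
qed

lemma norm_gd_step_sq_le:
  fixes A :: "real^'n^'m" and J :: "real^'N^'n"
  assumes "spec_norm A \<le> 1" "spec_norm J \<le> 1"
  shows "norm (x - A *v (J *v (transpose J *v (transpose A *v x)))) ^ 2
         \<le> norm x ^ 2 - norm (transpose J *v (transpose A *v x)) ^ 2"
proof (rule norm_diff_sq_le_of_inner_eq)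
  let ?g = "transpose J *v (transpose A *v x)"
  show "norm (A *v (J *v ?g)) \<le> norm ?g"
    using norm_mult_vec_le_norm[OF assms(1)] norm_mult_vec_le_norm[OF assms(2)] by (rule order_trans)
  show "inner x (A *v (J *v ?g)) = norm ?g ^ 2"
    by (simp add: power2_norm_eq_inner dot_lmul_matrix[symmetric])
qed

lemma norm_add_sq_le_of_inner_eq:
  fixes r z v k :: "'a::real_inner"
  assumes "norm z \<le> c" "z = v - k" "inner r k = c ^ 2"
    and "norm v \<le> e * c" "0 \<le> e"
  shows "norm (r + z) ^ 2 \<le> (1 + e ^ 2) * norm r ^ 2"
proof -
  have "norm (r + z) ^ 2 = norm r ^ 2 + 2 * inner r v - 2 * c ^ 2 + norm z ^ 2"
    using assms(2,3) by (simp add: power2_norm_eq_inner inner_add inner_diff inner_commute)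
  also have "norm z ^ 2 \<le> c ^ 2" using assms(1) by (simp add: power_mono)
  also have "inner r v \<le> (e * norm r) * c"
    using norm_cauchy_schwarz[of r v] mult_left_mono[OF assms(4) norm_ge_zero[of r]]
    by (simp add: mult_ac)
  also have "2 * ((e * norm r) * c) \<le> (e * norm r) ^ 2 + c ^ 2"
    using sum_squares_bound[of "e * norm r" c] by (simp add: mult_ac)
  finally show ?thesis by (simp add: power_mult_distrib algebra_simps)
qed

lemma sq_add_le_mult_of_sq_le:
  fixes D G S t :: real
  assumes "0 \<le> D" "0 \<le> G" "0 \<le> t" "0 \<le> S" "D ^ 2 \<le> t * S"
  shows "(D + G) ^ 2 \<le> (t + 1) * (S + G ^ 2)"
proof -
  have "(2 * D * G) ^ 2 \<le> 4 * (t * S) * G ^ 2"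
    using assms(5) by (simp add: power_mult_distrib mult_right_mono)
  also have "\<dots> \<le> (S + t * G ^ 2) ^ 2"
    using sum_squares_bound[of S "t * G ^ 2"] by (simp add: power2_sum algebra_simps)
  finally have "2 * D * G \<le> S + t * G ^ 2"
    by (rule power2_le_imp_le) (use assms in simp)
  then show ?thesis using assms(5) by (simp add: power2_sum algebra_simps)
qed

lemma one_plus_power_le:
  fixes e :: real
  assumes "0 \<le> e" "real t * e \<le> 1/2"
  shows "(1 + e) ^ t \<le> 16/9"
proof -
  have "(1 + e) ^ t \<le> exp e ^ t" using assms(1) by (intro power_mono) simp_all
  also have "\<dots> = exp (real t * e)" by (simp add: exp_of_nat_mult)
  also have "\<dots> \<le> exp (1/2)" using assms(2) by simp
  also have "\<dots> \<le> 16/9"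
  proof (rule power2_le_imp_le)
    have "exp (1/2::real) ^ 2 = exp 1" by (simp add: exp_of_nat_mult[symmetric])
    also have "\<dots> \<le> 3" by (rule exp_le)
    finally show "exp (1/2::real) ^ 2 \<le> (16/9) ^ 2" by (simp add: power2_eq_square)
  qed simp
  finally show ?thesis .
qed

lemma matrix_mean_value_linearization:
  fixes f :: "real^'a \<Rightarrow> real^'b"
  assumes deriv: "\<And>x. x \<in> S \<Longrightarrow> (f has_derivative (\<lambda>h. Jf x *v h)) (at x within S)"
    and "convex S" "x0 \<in> S" "a \<in> S" "b \<in> S"
    and close: "\<And>x. x \<in> S \<Longrightarrow> spec_norm (Jf x - Jf x0) \<le> e"
  shows "norm (f b - f a - Jf x0 *v (b - a)) \<le> e * norm (b - a)"
proof -
  have "a + t *\<^sub>R (b - a) \<in> S" if "t \<in> {0..1}" for t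
    using \<open>convex S\<close> \<open>a \<in> S\<close> \<open>b \<in> S\<close> that
    by (simp add: convex_alt algebra_simps)
  then have "norm (f b - f a - Jf x0 *v (b - a)) \<le> norm (b - a) * e"
    by (rule differentiable_bound_linearization[where f' = "\<lambda>x h. Jf x *v h"])
      (use deriv close \<open>x0 \<in> S\<close> in
        \<open>simp_all add: spec_norm_eq_onorm_diff\<close>)
  then show ?thesis by (simp add: mult.commute)
qed

lemma radius_budget:
  fixes \<epsilon> c R :: real
  assumes "0 \<le> \<epsilon>" "0 \<le> c" "t \<le> T"
    and "R \<ge> 2 * c * (sqrt (real T) + 2 * \<epsilon> * (real T)\<^sup>2)"
  shows "sqrt (real t) * c + 2 * \<epsilon> * (real t)\<^sup>2 * c \<le> R / 2"
proof -
  have "sqrt (real t) + 2 * \<epsilon> * (real t)\<^sup>2 \<le> sqrt (real T) + 2 * \<epsilon> * (real T)\<^sup>2"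
    using assms(1,3) by (intro add_mono mult_left_mono power_mono) simp_all
  then have "c * (sqrt (real t) + 2 * \<epsilon> * (real t)\<^sup>2) \<le> c * (sqrt (real T) + 2 * \<epsilon> * (real T)\<^sup>2)"
    using assms(2) by (rule mult_left_mono)
  then show ?thesis using assms(4) by (simp add: algebra_simps)
qed

section \<open>Gradient descent and its linearization\<close>

locale gd_linearization =
  fixes f :: "real^'N \<Rightarrow> real^'n"
    and Jf :: "real^'N \<Rightarrow> real^'N^'n"
    and J :: "real^'N^'n"
    and A :: "real^'n^'m"
    and y :: "real^'m"
    and \<theta> \<theta>t :: "nat \<Rightarrow> real^'N"
    and \<epsilon> R :: real
  assumes deriv: "\<And>x. (f has_derivative (\<lambda>h. Jf x *v h)) (at x)"
    and A_le: "spec_norm A \<le> 1"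
    and iter: "\<And>t. \<theta> (Suc t) = \<theta> t - transpose (Jf (\<theta> t)) *v (transpose A *v (A *v f (\<theta> t) - y))"
    and iter_lin: "\<And>t. \<theta>t (Suc t) = \<theta>t t - transpose J *v (transpose A *v
                     (A *v f (\<theta> 0) + A *v (J *v (\<theta>t t - \<theta> 0)) - y))"
    and start: "\<theta>t 0 = \<theta> 0"
    and J_le: "spec_norm J \<le> 1"
    and Jf_le: "\<And>x. spec_norm (Jf x) \<le> 1"
    and Jf0_close: "spec_norm (Jf (\<theta> 0) - J) \<le> \<epsilon>"
    and gram_close: "spec_norm (Jf (\<theta> 0) ** transpose (Jf (\<theta> 0)) - J ** transpose J) \<le> \<epsilon>\<^sup>2"
    and eps_pos: "\<epsilon> > 0"
    and eps_le: "\<epsilon> \<le> 1"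
    and R_pos: "R > 0"
    and Jf_local: "\<And>x. norm (x - \<theta> 0) \<le> R \<Longrightarrow> spec_norm (Jf x - Jf (\<theta> 0)) \<le> \<epsilon> / 2"
begin

definition res :: "nat \<Rightarrow> real^'m" where
  "res t = A *v f (\<theta> t) - y"

definition res_lin :: "nat \<Rightarrow> real^'m" where
  "res_lin t = A *v f (\<theta> 0) + A *v (J *v (\<theta>t t - \<theta> 0)) - y"

definition grad :: "nat \<Rightarrow> real^'N" where
  "grad t = transpose (Jf (\<theta> t)) *v (transpose A *v res t)"

definition grad_lin :: "nat \<Rightarrow> real^'N" where
  "grad_lin t = transpose J *v (transpose A *v res_lin t)"

lemma theta_Suc: "\<theta> (Suc t) = \<theta> t - grad t"
  unfolding grad_def res_def by (rule iter)

lemma theta_lin_Suc: "\<theta>t (Suc t) = \<theta>t t - grad_lin t"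
  unfolding grad_lin_def res_lin_def by (rule iter_lin)

lemma res_lin_0: "res_lin 0 = res 0"
  unfolding res_lin_def res_def start by simp

lemma res_lin_Suc: "res_lin (Suc t) = res_lin t - A *v (J *v grad_lin t)"
  unfolding res_lin_def[of "Suc t"] res_lin_def[of t] theta_lin_Suc
  by (simp add: algebra_simps)

lemma norm_grad_le: "norm (grad t) \<le> norm (res t)"
  unfolding grad_def
  using norm_transpose_mult_vec_le_norm[OF Jf_le] norm_transpose_mult_vec_le_norm[OF A_le]
  by (rule order_trans)

lemma norm_res_lin_Suc_sq_le: "norm (res_lin (Suc t)) ^ 2 \<le> norm (res_lin t) ^ 2 - norm (grad_lin t) ^ 2"
  unfolding res_lin_Suc grad_lin_def by (rule norm_gd_step_sq_le[OF A_le J_le])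

lemma theta_lin_dist_sq_le:
  "norm (res_lin t) \<le> norm (res 0)
   \<and> norm (\<theta>t t - \<theta> 0) ^ 2 \<le> real t * (norm (res 0) ^ 2 - norm (res_lin t) ^ 2)"
proof (induction t)
  case 0 then show ?case using res_lin_0 start by simp
next
  case (Suc t)
  let ?S = "norm (res 0) ^ 2 - norm (res_lin t) ^ 2"
  have S_nonneg: "0 \<le> ?S" using Suc by (simp add: power_mono)
  have "norm (res_lin (Suc t)) ^ 2 \<le> norm (res 0) ^ 2"
    using norm_res_lin_Suc_sq_le[of t] S_nonneg zero_le_power2[of "norm (grad_lin t)"] by linarith
  then have res_le: "norm (res_lin (Suc t)) \<le> norm (res 0)"
    by (rule power2_le_imp_le) simp
  have "norm (\<theta>t (Suc t) - \<theta> 0) ^ 2 \<le> (norm (\<theta>t t - \<theta> 0) + norm (grad_lin t)) ^ 2"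
    unfolding theta_lin_Suc using norm_triangle_ineq4[of "\<theta>t t - \<theta> 0" "grad_lin t"]
    by (intro power_mono) (simp_all add: algebra_simps)
  also have "\<dots> \<le> (real t + 1) * (?S + norm (grad_lin t) ^ 2)"
    using Suc S_nonneg by (intro sq_add_le_mult_of_sq_le) simp_all
  also have "\<dots> \<le> (real t + 1) * (norm (res 0) ^ 2 - norm (res_lin (Suc t)) ^ 2)"
    using norm_res_lin_Suc_sq_le[of t] by (intro mult_left_mono) simp_all
  finally show ?case using res_le by (simp add: add.commute)
qed

lemma theta_lin_dist_le: "norm (\<theta>t t - \<theta> 0) \<le> sqrt (real t) * norm (res 0)"
proof -
  have "norm (\<theta>t t - \<theta> 0) ^ 2 \<le> real t * norm (res 0) ^ 2"
    using theta_lin_dist_sq_le[of t]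
      mult_left_mono[of "norm (res 0) ^ 2 - norm (res_lin t) ^ 2" "norm (res 0) ^ 2" "real t"]
    by simp
  then have "norm (\<theta>t t - \<theta> 0) \<le> sqrt (real t * norm (res 0) ^ 2)"
    by (rule real_le_rsqrt)
  then show ?thesis by (simp add: real_sqrt_mult)
qed

lemma f_lipschitz: "norm (f a - f b) \<le> norm (a - b)"
  using differentiable_bound[of UNIV f "\<lambda>x h. Jf x *v h" 1 a b] deriv Jf_le
  by (simp add: spec_norm_def)

lemma Jf_close:
  assumes "norm (x - \<theta> 0) \<le> R" "norm (x' - \<theta> 0) \<le> R"
  shows "spec_norm (Jf x - Jf x') \<le> \<epsilon>"
  using spec_norm_diff_le[of "Jf x - Jf (\<theta> 0)" "Jf x' - Jf (\<theta> 0)"]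
    Jf_local[OF assms(1)] Jf_local[OF assms(2)] by simp

lemma linearization_error_le:
  assumes "norm (\<theta> t - \<theta> 0) \<le> R" "norm (\<theta> (Suc t) - \<theta> 0) \<le> R"
  shows "norm (f (\<theta> (Suc t)) - f (\<theta> t) + Jf (\<theta> t) *v grad t) \<le> \<epsilon> * norm (grad t)"
proof -
  have "norm (f (\<theta> (Suc t)) - f (\<theta> t) - Jf (\<theta> t) *v (\<theta> (Suc t) - \<theta> t))
      \<le> \<epsilon> * norm (\<theta> (Suc t) - \<theta> t)"
    by (rule matrix_mean_value_linearization[OF has_derivative_at_withinI[OF deriv],
          where S = "cball (\<theta> 0) R"]) 
      (use assms Jf_close in \<open>simp_all add: dist_norm norm_minus_commute\<close>)
  then show ?thesis by (simp add: theta_Suc linear_neg[OF matrix_vector_mul_linear])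
qed

lemma grad_diff_le:
  assumes "norm (\<theta> t - \<theta> 0) \<le> R"
  shows "norm (grad t - grad_lin t) \<le> norm (res_lin t - res t) + 3/2 * \<epsilon> * norm (res t)"
proof -
  let ?q = "transpose A *v res t"
  have split: "grad t - grad_lin t = transpose J *v (transpose A *v (res t - res_lin t))
      + transpose (Jf (\<theta> t) - Jf (\<theta> 0)) *v ?q + transpose (Jf (\<theta> 0) - J) *v ?q"
    unfolding grad_def grad_lin_def by (simp add: algebra_simps)
  have "norm (transpose J *v (transpose A *v (res t - res_lin t))) \<le> norm (transpose A *v (res t - res_lin t))"
    using J_le by (rule norm_transpose_mult_vec_le_norm)
  also have "\<dots> \<le> norm (res t - res_lin t)"
    using A_le by (rule norm_transpose_mult_vec_le_norm)
  finally have "norm (transpose J *v (transpose A *v (res t - res_lin t))) \<le> norm (res_lin t - res t)"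
    by (simp add: norm_minus_commute)
  moreover have "norm (transpose (Jf (\<theta> t) - Jf (\<theta> 0)) *v ?q) \<le> \<epsilon>/2 * norm ?q"
    using Jf_local[OF assms] by (rule norm_transpose_mult_vec_le)
  moreover have "norm (transpose (Jf (\<theta> 0) - J) *v ?q) \<le> \<epsilon> * norm ?q"
    using Jf0_close by (rule norm_transpose_mult_vec_le)
  ultimately have "norm (grad t - grad_lin t) \<le> norm (res_lin t - res t) + \<epsilon>/2 * norm ?q + \<epsilon> * norm ?q"
    unfolding split by (intro norm_triangle_mono)
  moreover have "3/2 * \<epsilon> * norm ?q \<le> 3/2 * \<epsilon> * norm (res t)"
    using norm_transpose_mult_vec_le_norm[OF A_le, of "res t"] eps_pos by (intro mult_left_mono) simp_all
  ultimately show ?thesis by linarith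
qed

lemma norm_res_Suc_sq_le:
  assumes "norm (\<theta> t - \<theta> 0) \<le> R" "norm (\<theta> (Suc t) - \<theta> 0) \<le> R"
  shows "norm (res (Suc t)) ^ 2 \<le> (1 + \<epsilon>\<^sup>2) * norm (res t) ^ 2"
proof -
  let ?k = "A *v (Jf (\<theta> t) *v grad t)"
  have res_Suc: "res (Suc t) = res t + A *v (f (\<theta> (Suc t)) - f (\<theta> t))"
    unfolding res_def by (simp add: matrix_vector_mult_diff_distrib)
  show ?thesis
    unfolding res_Suc
  proof (rule norm_add_sq_le_of_inner_eq)
    have "norm (A *v (f (\<theta> (Suc t)) - f (\<theta> t))) \<le> norm (f (\<theta> (Suc t)) - f (\<theta> t))"
      using A_le by (rule norm_mult_vec_le_norm)
    also have "\<dots> \<le> norm (grad t)"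
      using f_lipschitz[of "\<theta> (Suc t)" "\<theta> t"] by (simp add: theta_Suc)
    finally show "norm (A *v (f (\<theta> (Suc t)) - f (\<theta> t))) \<le> norm (grad t)" .
    show "A *v (f (\<theta> (Suc t)) - f (\<theta> t))
        = A *v (f (\<theta> (Suc t)) - f (\<theta> t) + Jf (\<theta> t) *v grad t) - ?k"
      by (simp add: matrix_vector_right_distrib)
    show "inner (res t) ?k = norm (grad t) ^ 2"
      by (simp add: grad_def power2_norm_eq_inner dot_lmul_matrix[symmetric])
    show "norm (A *v (f (\<theta> (Suc t)) - f (\<theta> t) + Jf (\<theta> t) *v grad t)) \<le> \<epsilon> * norm (grad t)"
      using norm_mult_vec_le_norm[OF A_le] linearization_error_le[OF assms] by (rule order_trans)
  qed (use eps_pos in simp)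
qed

lemma res_diff_Suc_le:
  assumes "norm (\<theta> t - \<theta> 0) \<le> R" "norm (\<theta> (Suc t) - \<theta> 0) \<le> R"
  shows "norm (res_lin (Suc t) - res (Suc t)) \<le> norm (res_lin t - res t) + 3 * \<epsilon> * norm (res t)"
proof -
  let ?e = "res_lin t - res t"
  let ?q = "transpose A *v res t"
  let ?Jt = "Jf (\<theta> t)"
  let ?gram_diff = "?Jt *v (transpose ?Jt *v ?q) - J *v (transpose J *v ?q)"
  define lin_err where "lin_err = A *v (f (\<theta> (Suc t)) - f (\<theta> t) + ?Jt *v grad t)"
  have "res (Suc t) = res t + lin_err - A *v (?Jt *v grad t)"
    unfolding res_def lin_err_def by (simp add: algebra_simps)
  then have split: "res_lin (Suc t) - res (Suc t)
      = (?e - A *v (J *v (transpose J *v (transpose A *v ?e)))) + A *v ?gram_diff - lin_err"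
    unfolding res_lin_Suc grad_lin_def grad_def by (simp add: algebra_simps)
  have "norm (?e - A *v (J *v (transpose J *v (transpose A *v ?e)))) ^ 2 \<le> norm ?e ^ 2"
    using norm_gd_step_sq_le[OF A_le J_le, of ?e]
      zero_le_power2[of "norm (transpose J *v (transpose A *v ?e))"] by linarith
  then have "norm (?e - A *v (J *v (transpose J *v (transpose A *v ?e)))) \<le> norm ?e"
    by (rule power2_le_imp_le) simp
  moreover have "norm (A *v ?gram_diff) \<le> 2 * \<epsilon> * norm (res t)"
  proof -
    have "norm (A *v ?gram_diff) \<le> norm ?gram_diff"
      using A_le by (rule norm_mult_vec_le_norm)
    also have "\<dots> \<le> (2 * (\<epsilon> / 2) + \<epsilon>\<^sup>2) * norm ?q"
      using Jf_le Jf_le Jf_local[OF assms(1)] gram_close by (rule norm_gram_diff_le)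
    also have "\<dots> \<le> 2 * \<epsilon> * norm (res t)"
      using eps_pos eps_le norm_transpose_mult_vec_le_norm[OF A_le, of "res t"]
      by (intro mult_mono) (simp_all add: power2_eq_square mult_left_le)
    finally show ?thesis .
  qed
  moreover have "norm lin_err \<le> \<epsilon> * norm (res t)"
  proof -
    have "norm lin_err \<le> norm (f (\<theta> (Suc t)) - f (\<theta> t) + ?Jt *v grad t)"
      unfolding lin_err_def using A_le by (rule norm_mult_vec_le_norm)
    also have "\<dots> \<le> \<epsilon> * norm (grad t)"
      using assms by (rule linearization_error_le)
    also have "\<dots> \<le> \<epsilon> * norm (res t)"
      using eps_pos norm_grad_le by (intro mult_left_mono) simp_all
    finally show ?thesis .
  qed
  ultimately show ?thesis
    unfolding split
    using norm_triangle_ineq4[of "(?e - A *v (J *v (transpose J *v (transpose A *v ?e)))) + A *v ?gram_diff" lin_err]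
      norm_triangle_ineq[of "?e - A *v (J *v (transpose J *v (transpose A *v ?e)))" "A *v ?gram_diff"]
    by linarith
qed

text \<open>The last conjunct is what keeps \<open>\<parallel>r\<^sub>\<tau>\<parallel> \<le> 4/3 \<parallel>r\<^sub>0\<parallel>\<close> along the induction.\<close>

definition bounds_at :: "nat \<Rightarrow> bool" where
  "bounds_at t \<longleftrightarrow> norm (\<theta> t - \<theta> 0) \<le> R / 2
     \<and> norm (res_lin t - res t) \<le> 4 * \<epsilon> * real t * norm (res 0)
     \<and> norm (\<theta>t t - \<theta> t) \<le> 2 * \<epsilon> * (real t)\<^sup>2 * norm (res 0)
     \<and> norm (res t) ^ 2 \<le> (1 + \<epsilon>\<^sup>2) ^ t * norm (res 0) ^ 2"

lemma norm_res_le_of_growth: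
  assumes T_le: "real T \<le> 1 / (2 * \<epsilon>\<^sup>2)" and "t \<le> T"
    and growth: "norm (res t) ^ 2 \<le> (1 + \<epsilon>\<^sup>2) ^ t * norm (res 0) ^ 2"
  shows "norm (res t) \<le> 4/3 * norm (res 0)"
proof (rule power2_le_imp_le)
  have "real t * \<epsilon>\<^sup>2 \<le> real T * \<epsilon>\<^sup>2"
    using \<open>t \<le> T\<close> by (intro mult_right_mono) simp_all
  also have "\<dots> \<le> 1/2"
    using T_le eps_pos by (simp add: le_divide_eq mult.commute)
  finally have "(1 + \<epsilon>\<^sup>2) ^ t \<le> 16/9"
    by (intro one_plus_power_le) simp_all
  then have "norm (res t) ^ 2 \<le> 16/9 * norm (res 0) ^ 2"
    using growth mult_right_mono[of "(1 + \<epsilon>\<^sup>2) ^ t" "16/9" "norm (res 0) ^ 2"] by simp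
  also have "\<dots> = (4/3 * norm (res 0)) ^ 2"
    by (simp add: power2_eq_square)
  finally show "norm (res t) ^ 2 \<le> (4/3 * norm (res 0)) ^ 2" .
qed simp

lemma theta_gap_Suc_le:
  assumes "norm (\<theta> t - \<theta> 0) \<le> R"
    and "norm (res_lin t - res t) \<le> 4 * \<epsilon> * real t * norm (res 0)"
    and "norm (\<theta>t t - \<theta> t) \<le> 2 * \<epsilon> * (real t)\<^sup>2 * norm (res 0)"
    and "norm (res t) \<le> 4/3 * norm (res 0)"
  shows "norm (\<theta>t (Suc t) - \<theta> (Suc t)) \<le> 2 * \<epsilon> * (real (Suc t))\<^sup>2 * norm (res 0)"
proof -
  let ?r0 = "norm (res 0)"
  have "3/2 * \<epsilon> * norm (res t) \<le> 3/2 * \<epsilon> * (4/3 * ?r0)"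
    using assms(4) eps_pos by (intro mult_left_mono) simp_all
  then have "norm (grad t - grad_lin t) \<le> 4 * \<epsilon> * real t * ?r0 + 2 * \<epsilon> * ?r0"
    using grad_diff_le[OF assms(1)] assms(2) by simp
  then have "norm (\<theta>t (Suc t) - \<theta> (Suc t))
      \<le> 2 * \<epsilon> * (real t)\<^sup>2 * ?r0 + (4 * \<epsilon> * real t * ?r0 + 2 * \<epsilon> * ?r0)"
    unfolding theta_lin_Suc theta_Suc
    using norm_triangle_ineq[of "\<theta>t t - \<theta> t" "grad t - grad_lin t"] assms(3)
    by (simp add: algebra_simps)
  also have "\<dots> = 2 * \<epsilon> * (real (Suc t))\<^sup>2 * ?r0"
    by (simp add: power2_eq_square algebra_simps)
  finally show ?thesis .
qed

lemma bounds_at_Suc: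
  assumes T_le: "real T \<le> 1 / (2 * \<epsilon>\<^sup>2)"
    and R_ge: "R \<ge> 2 * norm (res 0) * (sqrt (real T) + 2 * \<epsilon> * (real T)\<^sup>2)"
    and "Suc t \<le> T" "bounds_at t"
  shows "bounds_at (Suc t)"
proof -
  let ?r0 = "norm (res 0)"
  have theta_t: "norm (\<theta> t - \<theta> 0) \<le> R / 2"
    and err_t: "norm (res_lin t - res t) \<le> 4 * \<epsilon> * real t * ?r0"
    and dist_t: "norm (\<theta>t t - \<theta> t) \<le> 2 * \<epsilon> * (real t)\<^sup>2 * ?r0"
    and growth_t: "norm (res t) ^ 2 \<le> (1 + \<epsilon>\<^sup>2) ^ t * ?r0 ^ 2"
    using \<open>bounds_at t\<close> unfolding bounds_at_def by auto
  have res_t: "norm (res t) \<le> 4/3 * ?r0"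
    using T_le _ growth_t by (rule norm_res_le_of_growth) (use \<open>Suc t \<le> T\<close> in simp)
  have theta_t_R: "norm (\<theta> t - \<theta> 0) \<le> R"
    using theta_t R_pos by simp
  have dist_Suc: "norm (\<theta>t (Suc t) - \<theta> (Suc t)) \<le> 2 * \<epsilon> * (real (Suc t))\<^sup>2 * ?r0"
    using theta_t_R err_t dist_t res_t by (rule theta_gap_Suc_le)
  have "norm (\<theta> (Suc t) - \<theta> 0) \<le> norm (\<theta>t (Suc t) - \<theta> 0) + norm (\<theta>t (Suc t) - \<theta> (Suc t))"
    using norm_triangle_ineq4[of "\<theta>t (Suc t) - \<theta> 0" "\<theta>t (Suc t) - \<theta> (Suc t)"] by simp
  also have "\<dots> \<le> sqrt (real (Suc t)) * ?r0 + 2 * \<epsilon> * (real (Suc t))\<^sup>2 * ?r0"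
    using theta_lin_dist_le dist_Suc by (rule add_mono)
  also have "\<dots> \<le> R / 2"
    using eps_pos \<open>Suc t \<le> T\<close> R_ge by (intro radius_budget) simp_all
  finally have theta_Suc_R2: "norm (\<theta> (Suc t) - \<theta> 0) \<le> R / 2" .
  then have theta_Suc_R: "norm (\<theta> (Suc t) - \<theta> 0) \<le> R"
    using R_pos by simp
  have "norm (res (Suc t)) ^ 2 \<le> (1 + \<epsilon>\<^sup>2) ^ Suc t * ?r0 ^ 2"
    using norm_res_Suc_sq_le[OF theta_t_R theta_Suc_R] mult_left_mono[OF growth_t, of "1 + \<epsilon>\<^sup>2"]
    by (simp add: mult.assoc)
  moreover have "3 * \<epsilon> * norm (res t) \<le> 3 * \<epsilon> * (4/3 * ?r0)"
    using res_t eps_pos by (intro mult_left_mono) simp_all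
  then have "norm (res_lin (Suc t) - res (Suc t)) \<le> 4 * \<epsilon> * real (Suc t) * ?r0"
    using res_diff_Suc_le[OF theta_t_R theta_Suc_R] err_t by (simp add: algebra_simps)
  ultimately show ?thesis
    unfolding bounds_at_def using theta_Suc_R2 dist_Suc by blast
qed

lemma bounds_at_le:
  assumes "real T \<le> 1 / (2 * \<epsilon>\<^sup>2)"
    and "R \<ge> 2 * norm (res 0) * (sqrt (real T) + 2 * \<epsilon> * (real T)\<^sup>2)"
  shows "t \<le> T \<Longrightarrow> bounds_at t"
proof (induction t)
  case 0 then show ?case using R_pos by (simp add: bounds_at_def res_lin_0 start)
next
  case (Suc t) then show ?case using bounds_at_Suc[OF assms] by simp
qed

end

theorem corollary3p1:
  fixes f :: "real^'N \<Rightarrow> real^'n"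
    and Jf :: "real^'N \<Rightarrow> real^'N^'n"
    and J :: "real^'N^'n"
    and A :: "real^'n^'m"
    and y :: "real^'m"
    and \<theta> \<theta>t :: "nat \<Rightarrow> real^'N"
    and \<epsilon> R :: real
    and T :: nat
  assumes deriv: "\<And>x. (f has_derivative (\<lambda>h. Jf x *v h)) (at x)"
    and Jcont: "continuous_on UNIV Jf"
    and gamma: "spec_norm A \<le> 1"
    and iter: "\<And>t. \<theta> (Suc t) = \<theta> t - transpose (Jf (\<theta> t)) *v (transpose A *v (A *v f (\<theta> t) - y))"
    and iter_lin: "\<And>t. \<theta>t (Suc t) = \<theta>t t - transpose J *v (transpose A *v
                     (A *v f (\<theta> 0) + A *v (J *v (\<theta>t t - \<theta> 0)) - y))"
    and start: "\<theta>t 0 = \<theta> 0"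
    and A1: "spec_norm J \<le> 1" "\<And>x. spec_norm (Jf x) \<le> 1"
    and A2: "spec_norm (Jf (\<theta> 0) - J) \<le> \<epsilon>"
            "spec_norm (Jf (\<theta> 0) ** transpose (Jf (\<theta> 0)) - J ** transpose J) \<le> \<epsilon>\<^sup>2"
    and A3: "\<epsilon> > 0" "R > 0"
            "\<And>x. norm (x - \<theta> 0) \<le> R \<Longrightarrow> spec_norm (Jf x - Jf (\<theta> 0)) \<le> \<epsilon> / 2"
    and eps_le: "\<epsilon> \<le> 1"
    and T_le: "real T \<le> 1 / (2 * \<epsilon>\<^sup>2)"
    and R_ge: "R \<ge> 2 * norm (A *v f (\<theta> 0) - y) * (sqrt (real T) + 2 * \<epsilon> * (real T)\<^sup>2)"
  shows "\<forall>\<tau>\<le>T.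
           norm (\<theta> \<tau> - \<theta> 0) \<le> R / 2
         \<and> norm ((A *v f (\<theta> 0) + A *v (J *v (\<theta>t \<tau> - \<theta> 0)) - y) - (A *v f (\<theta> \<tau>) - y))
             \<le> 4 * \<epsilon> * real \<tau> * norm (A *v f (\<theta> 0) - y)
         \<and> norm (\<theta>t \<tau> - \<theta> \<tau>) \<le> 2 * \<epsilon> * (real \<tau>)\<^sup>2 * norm (A *v f (\<theta> 0) - y)"
proof -
  interpret gd_linearization f Jf J A y \<theta> \<theta>t \<epsilon> R
    using deriv gamma iter iter_lin start A1 A2 A3 eps_le by unfold_locales
  have "bounds_at \<tau>" if "\<tau> \<le> T" for \<tau>
    using T_le R_ge that by (rule bounds_at_le[unfolded res_def])
  then show ?thesis
    unfolding bounds_at_def res_def res_lin_def by blast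
qed

end
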